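(* Let $(A,\succ,\prec)$ be an anti-pre-Novikov algebra and $s=\sum_i a_i\otimes b_i\in A\otimes A$. For $\zeta,\eta\in A^*$: (a) $P(s):=s_{12}\circ s_{13}+s_{23}\odot s_{13}+s_{12}\prec s_{23}=0$ iff $T_{\tau(s)}(\zeta)\circ T_{\tau(s)}(\eta)=T_{\tau(s)}(L_{\odot}^*(T_s(\zeta))\eta+R_{\prec}^*(T_{\tau(s)}(\eta))\zeta)$ for all $\zeta,\eta$; (b) $P_1(s):=s_{12}\prec s_{13}-s_{13}\odot s_{23}+s_{12}\circ s_{23}=0$ iff $T_{\tau(s)}(\zeta)\prec T_{\tau(s)}(\eta)=T_{\tau(s)}(R_{\circ}^*(T_{\tau(s)}(\eta))\zeta-R_{\odot}^*(T_s(\zeta))\eta)$ for all $\zeta,\eta$; (c) $P_2(s):=s_{12}\succ s_{13}+s_{13}\star s_{23}-s_{12}\succ s_{23}=0$ iff $T_{\tau(s)}(\zeta)\succ T_{\tau(s)}(\eta)=T_{\tau(s)}(L_{\star}^*(T_s(\zeta))\eta-R_{\succ}^*(T_{\tau(s)}(\eta))\zeta)$ for all $\zeta,\eta$; (d) $P_3(s):=s_{13}\circ s_{23}-s_{13}\prec s_{12}-s_{12}\odot s_{23}=0$ iff $T_s(\zeta)\circ T_s(\eta)=T_s(-L_{\odot}^*(T_s(\zeta))\eta-R_{\prec}^*(T_{\tau(s)}(\eta))\zeta)$ for all $\zeta,\eta$; (e) $P_4(s):=s_{13}\circ s_{12}-s_{13}\prec s_{23}-s_{23}\odot s_{12}=0$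 iff $T_s(\zeta)\prec T_s(\eta)=T_s(R_{\odot}^*(T_s(\zeta))\eta-R_{\circ}^*(T_{\tau(s)}(\eta))\zeta)$ for all $\zeta,\eta$; (f) $P_5(s):=s_{12}\star s_{23}-s_{13}\succ s_{12}-s_{13}\succ s_{23}=0$ iff $T_s(\zeta)\succ T_s(\eta)=T_s(R_{\succ}^*(T_{\tau(s)}(\eta))\zeta-L_{\star}^*(T_s(\zeta))\eta)$ for all $\zeta,\eta$.
   Context: $A$ is finite-dimensional over a field $k$. An anti-pre-Novikov algebra is $(A,\succ,\prec)$ such that with $x\circ y=x\succ y+x\prec y$: $(x\circ y-y\circ x)\succ z=y\succ(x\succ z)-x\succ(y\succ z)$; $x\prec(y\circ z)=(y\succ x)\prec z-(x\prec y)\prec z-y\succ(x\prec z)$; $(x\circ y)\succ z=-(x\succ z)\prec y$; $(x\prec y)\prec z=(x\prec z)\prec y$; $(x\circ y-y\circ x)\prec z=x\succ(y\circ z)-y\succ(x\circ z)$. Further $x\odot y=x\succ y+y\prec x$, $x\star y=x\circ y+y\circ x$. For an operation $\ast$, $L_\ast(x)y=x\ast y$, $R_\ast(x)y=y\ast x$; $L_{\star}=L_{\circ}+R_{\circ}$, $L_{\odot}=L_{\succ}+R_{\prec}$, $R_{\odot}=R_{\succ}+L_{\prec}$. For $f:A\to\mathrm{End}(A)$, $f^*(x)\in\mathrm{End}(A^* )$ is given by $\langle f^*(x)\zeta,y\rangle=-\langle\zeta,f(x)y\rangle$. $\tau(x\otimes y)=y\otimes x$. $T_s:A^*\to A$ is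 defined by $\langle T_s(\zeta),\eta\rangle=\langle s,\zeta\otimes\eta\rangle$. Tensor notation, for $s=\sum_i a_i\otimes b_i$ and an operation $\ast$ (sums over $i,j$): $s_{12}\ast s_{13}=\sum a_i\ast a_j\otimes b_i\otimes b_j$; $s_{13}\ast s_{12}=\sum a_i\ast a_j\otimes b_j\otimes b_i$; $s_{12}\ast s_{23}=\sum a_i\otimes b_i\ast a_j\otimes b_j$; $s_{13}\ast s_{23}=\sum a_i\otimes a_j\otimes b_i\ast b_j$; $s_{23}\ast s_{13}=\sum a_j\otimes a_i\otimes b_i\ast b_j$; $s_{23}\ast s_{12}=\sum a_j\otimes a_i\ast b_j\otimes b_i$. (General rule: $s_{pq}$ places $a_i$ in tensor slot $p$ and $b_i$ in slot $q$; the product is taken in the common slot, with the factor from the left term on the left.) *)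

theory Defs
  imports Main "HOL-Library.Function_Algebras"
begin

text \<open>Coordinates: the finite-dimensional k-vector space A is k^n, modelled as
  functions 'n \<Rightarrow> 'k for a finite index type 'n; the dual A* is also 'n \<Rightarrow> 'k
  with the pairing below. An element
  s of A\<otimes>A is given as a finite list of pairs (a_i, b_i), s = sum a_i \<otimes> b_i.\<close>

definition pair :: "('n::finite \<Rightarrow> 'k::field) \<Rightarrow> ('n \<Rightarrow> 'k) \<Rightarrow> 'k" where
  "pair \<zeta> x = (\<Sum>i\<in>UNIV. \<zeta> i * x i)"

definition smul :: "'k::field \<Rightarrow> ('n \<Rightarrow> 'k) \<Rightarrow> ('n \<Rightarrow> 'k)" where
  "smul c v = (\<lambda>i. c * v i)"

definition bilinear_op :: "(('n \<Rightarrow> 'k::field) \<Rightarrow> ('n \<Rightarrow> 'k) \<Rightarrow> ('n \<Rightarrow> 'k)) \<Rightarrow> bool" where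
  "bilinear_op f \<longleftrightarrow>
     (\<forall>x y z. f (x + y) z = f x z + f y z) \<and>
     (\<forall>x y z. f x (y + z) = f x y + f x z) \<and>
     (\<forall>c x y. f (smul c x) y = smul c (f x y)) \<and>
     (\<forall>c x y. f x (smul c y) = smul c (f x y))"

definition circ where "circ sc pc x y = sc x y + pc x y"
definition odot where "odot sc pc x y = sc x y + pc y x"
definition star where "star sc pc x y = circ sc pc x y + circ sc pc y x"

definition anti_pre_Novikov ::
  "(('n::finite \<Rightarrow> 'k::field) \<Rightarrow> ('n \<Rightarrow> 'k) \<Rightarrow> ('n \<Rightarrow> 'k)) \<Rightarrow>
   (('n \<Rightarrow> 'k) \<Rightarrow> ('n \<Rightarrow> 'k) \<Rightarrow> ('n \<Rightarrow> 'k)) \<Rightarrow> bool" where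
  "anti_pre_Novikov sc pc \<longleftrightarrow> bilinear_op sc \<and> bilinear_op pc \<and>
    (\<forall>x y z. sc (circ sc pc x y - circ sc pc y x) z = sc y (sc x z) - sc x (sc y z)) \<and>
    (\<forall>x y z. pc x (circ sc pc y z) = pc (sc y x) z - pc (pc x y) z - sc y (pc x z)) \<and>
    (\<forall>x y z. sc (circ sc pc x y) z = - pc (sc x z) y) \<and>
    (\<forall>x y z. pc (pc x y) z = pc (pc x z) y) \<and>
    (\<forall>x y z. pc (circ sc pc x y - circ sc pc y x) z = sc x (circ sc pc y z) - sc y (circ sc pc x z))"

definition Lop where "Lop f x = (\<lambda>y. f x y)"
definition Rop where "Rop f x = (\<lambda>y. f y x)"

definition dualrep :: "(('n::finite \<Rightarrow> 'k::field) \<Rightarrow> ('n \<Rightarrow> 'k) \<Rightarrow> ('n \<Rightarrow> 'k)) \<Rightarrow>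
    ('n \<Rightarrow> 'k) \<Rightarrow> ('n \<Rightarrow> 'k) \<Rightarrow> ('n \<Rightarrow> 'k)" where
  "dualrep f x \<zeta> = (THE \<xi>. \<forall>y. pair \<xi> y = - pair \<zeta> (f x y))"

text \<open>\<tau>(s) and T_s: \<langle>T_s(\<zeta>), \<eta>\<rangle> = \<langle>s, \<zeta> \<otimes> \<eta>\<rangle>.\<close>
definition tau :: "('a \<times> 'a) list \<Rightarrow> ('a \<times> 'a) list" where
  "tau ss = map (\<lambda>p. (snd p, fst p)) ss"

definition Tmap :: "(('n::finite \<Rightarrow> 'k::field) \<times> ('n \<Rightarrow> 'k)) list \<Rightarrow> ('n \<Rightarrow> 'k) \<Rightarrow> ('n \<Rightarrow> 'k)" where
  "Tmap ss \<zeta> = (THE x. \<forall>\<eta>. pair \<eta> x = (\<Sum>p\<leftarrow>ss. pair \<zeta> (fst p) * pair \<eta> (snd p)))"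

type_synonym ('n,'k) t3 = "'n \<Rightarrow> 'n \<Rightarrow> 'n \<Rightarrow> 'k"

definition s12_13 :: "(('n \<Rightarrow> 'k::field) \<Rightarrow> ('n \<Rightarrow> 'k) \<Rightarrow> ('n \<Rightarrow> 'k)) \<Rightarrow> (('n \<Rightarrow> 'k) \<times> ('n \<Rightarrow> 'k)) list \<Rightarrow> ('n,'k) t3" where
  "s12_13 op ss = (\<lambda>x y z. \<Sum>p\<leftarrow>ss. \<Sum>q\<leftarrow>ss. op (fst p) (fst q) x * snd p y * snd q z)"
definition s13_12 :: "(('n \<Rightarrow> 'k::field) \<Rightarrow> ('n \<Rightarrow> 'k) \<Rightarrow> ('n \<Rightarrow> 'k)) \<Rightarrow> (('n \<Rightarrow> 'k) \<times> ('n \<Rightarrow> 'k)) list \<Rightarrow> ('n,'k) t3" where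
  "s13_12 op ss = (\<lambda>x y z. \<Sum>p\<leftarrow>ss. \<Sum>q\<leftarrow>ss. op (fst p) (fst q) x * snd q y * snd p z)"
definition s12_23 :: "(('n \<Rightarrow> 'k::field) \<Rightarrow> ('n \<Rightarrow> 'k) \<Rightarrow> ('n \<Rightarrow> 'k)) \<Rightarrow> (('n \<Rightarrow> 'k) \<times> ('n \<Rightarrow> 'k)) list \<Rightarrow> ('n,'k) t3" where
  "s12_23 op ss = (\<lambda>x y z. \<Sum>p\<leftarrow>ss. \<Sum>q\<leftarrow>ss. fst p x * op (snd p) (fst q) y * snd q z)"
definition s13_23 :: "(('n \<Rightarrow> 'k::field) \<Rightarrow> ('n \<Rightarrow> 'k) \<Rightarrow> ('n \<Rightarrow> 'k)) \<Rightarrow> (('n \<Rightarrow> 'k) \<times> ('n \<Rightarrow> 'k)) list \<Rightarrow> ('n,'k) t3" where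
  "s13_23 op ss = (\<lambda>x y z. \<Sum>p\<leftarrow>ss. \<Sum>q\<leftarrow>ss. fst p x * fst q y * op (snd p) (snd q) z)"
definition s23_13 :: "(('n \<Rightarrow> 'k::field) \<Rightarrow> ('n \<Rightarrow> 'k) \<Rightarrow> ('n \<Rightarrow> 'k)) \<Rightarrow> (('n \<Rightarrow> 'k) \<times> ('n \<Rightarrow> 'k)) list \<Rightarrow> ('n,'k) t3" where
  "s23_13 op ss = (\<lambda>x y z. \<Sum>p\<leftarrow>ss. \<Sum>q\<leftarrow>ss. fst q x * fst p y * op (snd p) (snd q) z)"
definition s23_12 :: "(('n \<Rightarrow> 'k::field) \<Rightarrow> ('n \<Rightarrow> 'k) \<Rightarrow> ('n \<Rightarrow> 'k)) \<Rightarrow> (('n \<Rightarrow> 'k) \<times> ('n \<Rightarrow> 'k)) list \<Rightarrow> ('n,'k) t3" where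
  "s23_12 op ss = (\<lambda>x y z. \<Sum>p\<leftarrow>ss. \<Sum>q\<leftarrow>ss. fst q x * op (fst p) (snd q) y * snd p z)"

end

theory Submission
  imports Defs
begin

(* Pair P(s) with theta (x) zeta (x) eta, with theta in the first slot for (a)-(c) and in
   the last slot for (d)-(f).  Each of the three tensor terms then pairs to +-<theta, t> for
   one term t of the operator identity; e.g. s12_13 of f gives
   <theta, f (T_tau(s) zeta) (T_tau(s) eta)> and s23_13 of g gives
   -<theta, T_tau(s) (L_g^* (T_s zeta) eta)>.  Hence P(s) pairs to <theta, LHS - RHS>, and
   the pairing is nondegenerate.  Part (c) also needs L_star = R_star, as star is commutative. *)

definition basis_vector :: "'n \<Rightarrow> 'n \<Rightarrow> 'k::field" where
  "basis_vector i = (\<lambda>j. if j = i then 1 else 0)"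

lemma pair_commute: "pair \<zeta> x = pair x \<zeta>"
  by (simp add: pair_def mult.commute)

lemma pair_basis_vector: "pair (basis_vector i) x = x i"
proof -
  have "pair (basis_vector i) x = (\<Sum>j\<in>UNIV. if j = i then x j else 0)"
    unfolding pair_def basis_vector_def by (rule sum.cong) auto
  then show ?thesis
    by simp
qed

lemma pair_ext_right: "(\<And>\<theta>. pair \<theta> u = pair \<theta> v) \<Longrightarrow> u = v"
  by (metis pair_basis_vector ext)

lemma pair_ext_left: "(\<And>y. pair u y = pair v y) \<Longrightarrow> u = v"
  by (metis pair_commute pair_ext_right)

lemma pair_add [simp]: "pair \<theta> (u + v) = pair \<theta> u + pair \<theta> v"
  by (simp add: pair_def sum.distrib algebra_simps)

lemma pair_diff [simp]: "pair \<theta> (u - v) = pair \<theta> u - pair \<theta> v"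
  by (simp add: pair_def sum_subtractf algebra_simps)

lemma pair_uminus [simp]: "pair \<theta> (- v) = - pair \<theta> v"
  by (simp add: pair_def sum_negf)

lemma pair_add_left [simp]: "pair (u + v) \<theta> = pair u \<theta> + pair v \<theta>"
  by (metis pair_add pair_commute)

lemma pair_diff_left [simp]: "pair (u - v) \<theta> = pair u \<theta> - pair v \<theta>"
  by (metis pair_diff pair_commute)

lemma pair_uminus_left [simp]: "pair (- v) \<theta> = - pair v \<theta>"
  by (metis pair_uminus pair_commute)

lemma pair_zero [simp]: "pair \<theta> 0 = 0"
  by (simp add: pair_def)

lemma pair_smul [simp]: "pair \<theta> (smul c v) = c * pair \<theta> v"
  by (simp add: pair_def smul_def sum_distrib_left algebra_simps)

lemma pair_sum [simp]: "pair \<theta> (sum g A) = (\<Sum>a\<in>A. pair \<theta> (g a))"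
proof (induction A rule: infinite_finite_induct)
  case (insert x F)
  then show ?case
    by (simp only: sum.insert[OF insert(1,2)] pair_add)
next
  case (infinite A)
  then show ?case
    by (simp only: sum.infinite[OF infinite] pair_zero)
qed (simp only: sum.empty pair_zero)

lemma pair_sum_list [simp]: "pair \<theta> (\<Sum>p\<leftarrow>xs. g p) = (\<Sum>p\<leftarrow>xs. pair \<theta> (g p))"
  by (induction xs)
    (simp_all only: list.map sum_list.Nil sum_list.Cons pair_zero pair_add)

lemma basis_vector_expansion:
  "(\<Sum>i\<in>UNIV. smul (y i) (basis_vector i)) = (y :: 'n::finite \<Rightarrow> 'k::field)"
proof (rule pair_ext_right)
  fix \<theta>
  show "pair \<theta> (\<Sum>i\<in>UNIV. smul (y i) (basis_vector i)) = pair \<theta> y"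
    by (simp only: pair_sum pair_smul pair_commute[of \<theta>] pair_basis_vector)
      (simp add: pair_def mult.commute)
qed

lemma bilinear_opD:
  assumes "bilinear_op f"
  shows "f (u + v) w = f u w + f v w" and "f w (u + v) = f w u + f w v"
    and "f (smul c u) w = smul c (f u w)" and "f w (smul c u) = smul c (f w u)"
  using assms unfolding bilinear_op_def by auto

lemma bilinear_op_sum_list:
  assumes "bilinear_op f"
  shows "f (\<Sum>p\<leftarrow>xs. g p) w = (\<Sum>p\<leftarrow>xs. f (g p) w)"
    and "f w (\<Sum>p\<leftarrow>xs. g p) = (\<Sum>p\<leftarrow>xs. f w (g p))"
proof -
  have "f 0 w = 0" and "f w 0 = 0"
    using bilinear_opD(1)[OF assms, of 0 0 w] bilinear_opD(2)[OF assms, of w 0 0]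
    by simp_all
  then show "f (\<Sum>p\<leftarrow>xs. g p) w = (\<Sum>p\<leftarrow>xs. f (g p) w)"
    and "f w (\<Sum>p\<leftarrow>xs. g p) = (\<Sum>p\<leftarrow>xs. f w (g p))"
    by (induction xs)
      (simp_all only: list.map sum_list.Nil sum_list.Cons bilinear_opD[OF assms])
qed

lemma bilinear_op_circ:
  "bilinear_op sc \<Longrightarrow> bilinear_op pc \<Longrightarrow> bilinear_op (circ sc pc)"
  unfolding bilinear_op_def circ_def smul_def by (auto simp: fun_eq_iff algebra_simps)

lemma bilinear_op_odot:
  "bilinear_op sc \<Longrightarrow> bilinear_op pc \<Longrightarrow> bilinear_op (odot sc pc)"
  unfolding bilinear_op_def odot_def smul_def by (auto simp: fun_eq_iff algebra_simps)

lemma bilinear_op_star: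
  "bilinear_op sc \<Longrightarrow> bilinear_op pc \<Longrightarrow> bilinear_op (star sc pc)"
  unfolding bilinear_op_def star_def circ_def smul_def by (auto simp: fun_eq_iff algebra_simps)

lemma Lop_star_eq_Rop_star:
  fixes sc pc :: "('n \<Rightarrow> 'k::field) \<Rightarrow> ('n \<Rightarrow> 'k) \<Rightarrow> ('n \<Rightarrow> 'k)"
  shows "Lop (star sc pc) = Rop (star sc pc)"
  unfolding Lop_def Rop_def star_def by (simp add: add.commute)

lemma Tmap_eq: "Tmap ss \<zeta> = (\<Sum>p\<leftarrow>ss. smul (pair \<zeta> (fst p)) (snd p))"
  unfolding Tmap_def
proof (rule the_equality)
  fix x
  assume "\<forall>\<eta>. pair \<eta> x = (\<Sum>p\<leftarrow>ss. pair \<zeta> (fst p) * pair \<eta> (snd p))"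
  then show "x = (\<Sum>p\<leftarrow>ss. smul (pair \<zeta> (fst p)) (snd p))"
    by (intro pair_ext_right) simp
qed simp

lemma pair_Tmap:
  "pair \<theta> (Tmap ss \<zeta>) = (\<Sum>p\<leftarrow>ss. pair \<zeta> (fst p) * pair \<theta> (snd p))"
  by (simp add: Tmap_eq)

lemma Tmap_add [simp]: "Tmap ss (\<zeta> + \<zeta>') = Tmap ss \<zeta> + Tmap ss \<zeta>'"
  by (rule pair_ext_right) (simp add: pair_Tmap sum_list_addf algebra_simps)

lemma Tmap_diff [simp]: "Tmap ss (\<zeta> - \<zeta>') = Tmap ss \<zeta> - Tmap ss \<zeta>'"
  by (rule pair_ext_right) (simp add: pair_Tmap sum_list_subtractf algebra_simps)

lemma Tmap_uminus [simp]: "Tmap ss (- \<zeta>) = - Tmap ss \<zeta>"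
  by (rule pair_ext_right) (simp add: pair_Tmap uminus_sum_list_map o_def)

lemma pair_dualrep:
  assumes add: "\<And>y z. f x (y + z) = f x y + f x z"
    and hom: "\<And>c y. f x (smul c y) = smul c (f x y)"
  shows "pair (dualrep f x \<zeta>) y = - pair \<zeta> (f x y)"
proof -
  define \<xi> where "\<xi> = (\<lambda>i. - pair \<zeta> (f x (basis_vector i)))"
  have "f x 0 = 0"
    using add[of 0 0] by simp
  then have expand:
    "f x y = (\<Sum>i\<in>UNIV. smul (y i) (f x (basis_vector i)))" for y
    using sum_comp_morphism[of "f x" "\<lambda>i. smul (y i) (basis_vector i)" UNIV]
    by (simp add: add hom o_def basis_vector_expansion)
  have represents: "\<forall>y. pair \<xi> y = - pair \<zeta> (f x y)"
  proof
    fix y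
    have "pair \<zeta> (f x y) = (\<Sum>i\<in>UNIV. y i * pair \<zeta> (f x (basis_vector i)))"
      by (subst expand) (simp only: pair_sum pair_smul)
    then show "pair \<xi> y = - pair \<zeta> (f x y)"
      unfolding pair_def[of \<xi> y] by (simp add: \<xi>_def sum_negf mult.commute)
  qed
  have "dualrep f x \<zeta> = \<xi>"
    unfolding dualrep_def
    by (rule the_equality) (use represents in \<open>auto intro: pair_ext_left\<close>)
  with represents show ?thesis
    by simp
qed

lemma pair_dualrep_Lop:
  assumes "bilinear_op f"
  shows "pair (dualrep (Lop f) x \<zeta>) y = - pair \<zeta> (f x y)"
proof -
  have "pair (dualrep (Lop f) x \<zeta>) y = - pair \<zeta> (Lop f x y)"
    by (rule pair_dualrep) (simp_all only: Lop_def bilinear_opD[OF assms])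
  then show ?thesis
    by (simp only: Lop_def)
qed

lemma pair_dualrep_Rop:
  assumes "bilinear_op f"
  shows "pair (dualrep (Rop f) x \<zeta>) y = - pair \<zeta> (f y x)"
proof -
  have "pair (dualrep (Rop f) x \<zeta>) y = - pair \<zeta> (Rop f x y)"
    by (rule pair_dualrep) (simp_all only: Rop_def bilinear_opD[OF assms])
  then show ?thesis
    by (simp only: Rop_def)
qed

lemma pair_op_Tmap_left:
  "bilinear_op f \<Longrightarrow>
    pair \<theta> (f (Tmap ss \<zeta>) y) = (\<Sum>p\<leftarrow>ss. pair \<zeta> (fst p) * pair \<theta> (f (snd p) y))"
  by (simp add: Tmap_eq bilinear_op_sum_list bilinear_opD)

lemma pair_op_Tmap_right:
  "bilinear_op f \<Longrightarrow>
    pair \<theta> (f y (Tmap ss \<zeta>)) = (\<Sum>p\<leftarrow>ss. pair \<zeta> (fst p) * pair \<theta> (f y (snd p)))"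
  by (simp add: Tmap_eq bilinear_op_sum_list bilinear_opD)

lemmas pair_Tmap_expansions =
  pair_Tmap pair_dualrep_Lop pair_dualrep_Rop pair_op_Tmap_left pair_op_Tmap_right

lemma sum_list_map_swap:
  "(\<Sum>p\<leftarrow>xs. \<Sum>q\<leftarrow>ys. f p q) = (\<Sum>q\<leftarrow>ys. \<Sum>p\<leftarrow>xs. (f p q :: 'a::comm_monoid_add))"
  by (induction xs) (simp_all add: sum_list_addf)

definition pair3 ::
  "('n::finite, 'k::field) t3 \<Rightarrow> ('n \<Rightarrow> 'k) \<Rightarrow> ('n \<Rightarrow> 'k) \<Rightarrow> ('n \<Rightarrow> 'k) \<Rightarrow> 'k" where
  "pair3 T a b c = (\<Sum>x\<in>UNIV. \<Sum>y\<in>UNIV. \<Sum>z\<in>UNIV. a x * b y * c z * T x y z)"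

lemma pair3_add [simp]: "pair3 (T + T') a b c = pair3 T a b c + pair3 T' a b c"
  by (simp add: pair3_def sum.distrib algebra_simps)

lemma pair3_diff [simp]: "pair3 (T - T') a b c = pair3 T a b c - pair3 T' a b c"
  by (simp add: pair3_def sum_subtractf algebra_simps)

lemma pair3_basis_vectors:
  "pair3 T (basis_vector x) (basis_vector y) (basis_vector z) = T x y z"
proof -
  have "pair3 T a b c = pair a (\<lambda>x. pair b (\<lambda>y. pair c (T x y)))" for a b c
    by (simp add: pair3_def pair_def sum_distrib_left mult_ac)
  then show ?thesis
    by (simp add: pair_basis_vector)
qed

lemma tensor_eq_0_iff_pair3: "T = (\<lambda>x y z. 0) \<longleftrightarrow> (\<forall>a b c. pair3 T a b c = 0)"
proof
  assume "\<forall>a b c. pair3 T a b c = 0"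
  then show "T = (\<lambda>x y z. 0)"
    by (intro ext) (metis pair3_basis_vectors)
qed (simp add: pair3_def)

lemma tensor_eq_0_iff_first:
  assumes "\<And>\<theta> \<zeta> \<eta>. pair3 T \<theta> \<zeta> \<eta> = pair \<theta> (V \<zeta> \<eta>) - pair \<theta> (W \<zeta> \<eta>)"
  shows "T = (\<lambda>x y z. 0) \<longleftrightarrow> (\<forall>\<zeta> \<eta>. V \<zeta> \<eta> = W \<zeta> \<eta>)"
  unfolding tensor_eq_0_iff_pair3 assms by (auto intro: pair_ext_right)

lemma tensor_eq_0_iff_last:
  assumes "\<And>\<theta> \<zeta> \<eta>. pair3 T \<zeta> \<eta> \<theta> = pair \<theta> (V \<zeta> \<eta>) - pair \<theta> (W \<zeta> \<eta>)"
  shows "T = (\<lambda>x y z. 0) \<longleftrightarrow> (\<forall>\<zeta> \<eta>. V \<zeta> \<eta> = W \<zeta> \<eta>)"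
    and "T = (\<lambda>x y z. 0) \<longleftrightarrow> (\<forall>\<zeta> \<eta>. W \<zeta> \<eta> = V \<zeta> \<eta>)"
  unfolding tensor_eq_0_iff_pair3 assms by (auto intro: pair_ext_right)

lemma pair3_sum_list:
  "pair3 (\<lambda>x y z. \<Sum>p\<leftarrow>xs. F p x y z) a b c = (\<Sum>p\<leftarrow>xs. pair3 (F p) a b c)"
  by (induction xs) (simp_all add: pair3_def sum.distrib distrib_left)

lemma pair3_rank_one:
  "pair3 (\<lambda>x y z. u x * v y * w z) a b c = pair a u * pair b v * pair c w"
proof -
  have "pair3 (\<lambda>x y z. u x * v y * w z) a b c
      = (\<Sum>x\<in>UNIV. a x * u x * (\<Sum>y\<in>UNIV. b y * v y * (\<Sum>z\<in>UNIV. c z * w z)))"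
    by (simp add: pair3_def sum_distrib_left mult_ac)
  also have "\<dots> = pair a u * pair b v * pair c w"
    by (simp only: pair_def mult.assoc sum_distrib_right)
  finally show ?thesis .
qed

lemma pair3_s12_13_Tmap_tau:
  assumes "bilinear_op f"
  shows "pair3 (s12_13 f s) \<theta> \<zeta> \<eta> = pair \<theta> (f (Tmap (tau s) \<zeta>) (Tmap (tau s) \<eta>))"
  unfolding s12_13_def pair3_sum_list pair3_rank_one
  by (simp add: pair_Tmap_expansions tau_def o_def uminus_sum_list_map
      sum_list_const_mult[symmetric] mult_ac assms)

lemma pair3_s23_13_Tmap_tau:
  assumes "bilinear_op f"
  shows "pair3 (s23_13 f s) \<theta> \<zeta> \<eta> = - pair \<theta> (Tmap (tau s) (dualrep (Lop f) (Tmap s \<zeta>) \<eta>))"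
  unfolding s23_13_def pair3_sum_list pair3_rank_one
  by (subst sum_list_map_swap)
    (simp add: pair_Tmap_expansions tau_def o_def uminus_sum_list_map
      sum_list_const_mult[symmetric] mult_ac assms)

lemma pair3_s12_23_Tmap_tau:
  assumes "bilinear_op f"
  shows "pair3 (s12_23 f s) \<theta> \<zeta> \<eta> = - pair \<theta> (Tmap (tau s) (dualrep (Rop f) (Tmap (tau s) \<eta>) \<zeta>))"
  unfolding s12_23_def pair3_sum_list pair3_rank_one
  by (simp add: pair_Tmap_expansions tau_def o_def uminus_sum_list_map
      sum_list_const_mult[symmetric] mult_ac assms)

lemma pair3_s13_23_Tmap_tau:
  assumes "bilinear_op f"
  shows "pair3 (s13_23 f s) \<theta> \<zeta> \<eta> = - pair \<theta> (Tmap (tau s) (dualrep (Rop f) (Tmap s \<zeta>) \<eta>))"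
  unfolding s13_23_def pair3_sum_list pair3_rank_one
  by (simp add: pair_Tmap_expansions tau_def o_def uminus_sum_list_map
      sum_list_const_mult[symmetric] mult_ac assms)

lemma pair3_s13_23_Tmap:
  assumes "bilinear_op f"
  shows "pair3 (s13_23 f s) \<zeta> \<eta> \<theta> = pair \<theta> (f (Tmap s \<zeta>) (Tmap s \<eta>))"
  unfolding s13_23_def pair3_sum_list pair3_rank_one
  by (simp add: pair_Tmap_expansions tau_def o_def uminus_sum_list_map
      sum_list_const_mult[symmetric] mult_ac assms)

lemma pair3_s13_12_Tmap:
  assumes "bilinear_op f"
  shows "pair3 (s13_12 f s) \<zeta> \<eta> \<theta> = - pair \<theta> (Tmap s (dualrep (Rop f) (Tmap (tau s) \<eta>) \<zeta>))"
  unfolding s13_12_def pair3_sum_list pair3_rank_one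
  by (simp add: pair_Tmap_expansions tau_def o_def uminus_sum_list_map
      sum_list_const_mult[symmetric] mult_ac assms)

lemma pair3_s12_23_Tmap:
  assumes "bilinear_op f"
  shows "pair3 (s12_23 f s) \<zeta> \<eta> \<theta> = - pair \<theta> (Tmap s (dualrep (Lop f) (Tmap s \<zeta>) \<eta>))"
  unfolding s12_23_def pair3_sum_list pair3_rank_one
  by (subst sum_list_map_swap)
    (simp add: pair_Tmap_expansions tau_def o_def uminus_sum_list_map
      sum_list_const_mult[symmetric] mult_ac assms)

lemma pair3_s23_12_Tmap:
  assumes "bilinear_op f"
  shows "pair3 (s23_12 f s) \<zeta> \<eta> \<theta> = - pair \<theta> (Tmap s (dualrep (Rop f) (Tmap s \<zeta>) \<eta>))"
  unfolding s23_12_def pair3_sum_list pair3_rank_one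
  by (simp add: pair_Tmap_expansions tau_def o_def uminus_sum_list_map
      sum_list_const_mult[symmetric] mult_ac assms)

lemma s12_13_plus_s23_13_plus_s12_23_eq_0_iff:
  assumes "bilinear_op f" and "bilinear_op g" and "bilinear_op h"
  shows "s12_13 f s + s23_13 g s + s12_23 h s = (\<lambda>x y z. 0) \<longleftrightarrow>
    (\<forall>\<zeta> \<eta>. f (Tmap (tau s) \<zeta>) (Tmap (tau s) \<eta>) =
      Tmap (tau s) (dualrep (Lop g) (Tmap s \<zeta>) \<eta> + dualrep (Rop h) (Tmap (tau s) \<eta>) \<zeta>))"
  by (rule tensor_eq_0_iff_first) (simp add: pair3_s12_13_Tmap_tau pair3_s23_13_Tmap_tau pair3_s12_23_Tmap_tau assms)

lemma s12_13_minus_s13_23_plus_s12_23_eq_0_iff: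
  assumes "bilinear_op f" and "bilinear_op g" and "bilinear_op h"
  shows "s12_13 f s - s13_23 g s + s12_23 h s = (\<lambda>x y z. 0) \<longleftrightarrow>
    (\<forall>\<zeta> \<eta>. f (Tmap (tau s) \<zeta>) (Tmap (tau s) \<eta>) =
      Tmap (tau s) (dualrep (Rop h) (Tmap (tau s) \<eta>) \<zeta> - dualrep (Rop g) (Tmap s \<zeta>) \<eta>))"
  by (rule tensor_eq_0_iff_first) (simp add: pair3_s12_13_Tmap_tau pair3_s13_23_Tmap_tau pair3_s12_23_Tmap_tau assms)

lemma s12_13_plus_s13_23_minus_s12_23_eq_0_iff:
  assumes "bilinear_op f" and "bilinear_op g" and "bilinear_op h"
  shows "s12_13 f s + s13_23 g s - s12_23 h s = (\<lambda>x y z. 0) \<longleftrightarrow>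
    (\<forall>\<zeta> \<eta>. f (Tmap (tau s) \<zeta>) (Tmap (tau s) \<eta>) =
      Tmap (tau s) (dualrep (Rop g) (Tmap s \<zeta>) \<eta> - dualrep (Rop h) (Tmap (tau s) \<eta>) \<zeta>))"
  by (rule tensor_eq_0_iff_first) (simp add: pair3_s12_13_Tmap_tau pair3_s13_23_Tmap_tau pair3_s12_23_Tmap_tau assms)

lemma s13_23_minus_s13_12_minus_s12_23_eq_0_iff:
  assumes "bilinear_op f" and "bilinear_op g" and "bilinear_op h"
  shows "s13_23 f s - s13_12 h s - s12_23 g s = (\<lambda>x y z. 0) \<longleftrightarrow>
    (\<forall>\<zeta> \<eta>. f (Tmap s \<zeta>) (Tmap s \<eta>) =
      Tmap s (- dualrep (Lop g) (Tmap s \<zeta>) \<eta> - dualrep (Rop h) (Tmap (tau s) \<eta>) \<zeta>))"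
  by (rule tensor_eq_0_iff_last(1)) (simp add: pair3_s13_23_Tmap pair3_s13_12_Tmap pair3_s12_23_Tmap assms)

lemma s13_12_minus_s13_23_minus_s23_12_eq_0_iff:
  assumes "bilinear_op f" and "bilinear_op g" and "bilinear_op h"
  shows "s13_12 h s - s13_23 f s - s23_12 g s = (\<lambda>x y z. 0) \<longleftrightarrow>
    (\<forall>\<zeta> \<eta>. f (Tmap s \<zeta>) (Tmap s \<eta>) =
      Tmap s (dualrep (Rop g) (Tmap s \<zeta>) \<eta> - dualrep (Rop h) (Tmap (tau s) \<eta>) \<zeta>))"
  by (rule tensor_eq_0_iff_last(2)) (simp add: pair3_s13_12_Tmap pair3_s13_23_Tmap pair3_s23_12_Tmap assms)

lemma s12_23_minus_s13_12_minus_s13_23_eq_0_iff: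
  assumes "bilinear_op f" and "bilinear_op g" and "bilinear_op h"
  shows "s12_23 g s - s13_12 h s - s13_23 f s = (\<lambda>x y z. 0) \<longleftrightarrow>
    (\<forall>\<zeta> \<eta>. f (Tmap s \<zeta>) (Tmap s \<eta>) =
      Tmap s (dualrep (Rop h) (Tmap (tau s) \<eta>) \<zeta> - dualrep (Lop g) (Tmap s \<zeta>) \<eta>))"
  by (rule tensor_eq_0_iff_last(2)) (simp add: pair3_s12_23_Tmap pair3_s13_12_Tmap pair3_s13_23_Tmap assms)

theorem mainTheorem6:
  fixes sc pc :: "('n::finite \<Rightarrow> 'k::field) \<Rightarrow> ('n \<Rightarrow> 'k) \<Rightarrow> ('n \<Rightarrow> 'k)"
    and s :: "(('n \<Rightarrow> 'k) \<times> ('n \<Rightarrow> 'k)) list"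
  assumes "anti_pre_Novikov sc pc"
  shows
  "(s12_13 (circ sc pc) s + s23_13 (odot sc pc) s + s12_23 pc s = (\<lambda>x y z. 0)
     \<longleftrightarrow> (\<forall>\<zeta> \<eta>. circ sc pc (Tmap (tau s) \<zeta>) (Tmap (tau s) \<eta>) =
        Tmap (tau s) (dualrep (Lop (odot sc pc)) (Tmap s \<zeta>) \<eta> + dualrep (Rop pc) (Tmap (tau s) \<eta>) \<zeta>)))
   \<and>
   (s12_13 pc s - s13_23 (odot sc pc) s + s12_23 (circ sc pc) s = (\<lambda>x y z. 0)
     \<longleftrightarrow> (\<forall>\<zeta> \<eta>. pc (Tmap (tau s) \<zeta>) (Tmap (tau s) \<eta>) =
        Tmap (tau s) (dualrep (Rop (circ sc pc)) (Tmap (tau s) \<eta>) \<zeta> - dualrep (Rop (odot sc pc)) (Tmap s \<zeta>) \<eta>)))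
   \<and>
   (s12_13 sc s + s13_23 (star sc pc) s - s12_23 sc s = (\<lambda>x y z. 0)
     \<longleftrightarrow> (\<forall>\<zeta> \<eta>. sc (Tmap (tau s) \<zeta>) (Tmap (tau s) \<eta>) =
        Tmap (tau s) (dualrep (Lop (star sc pc)) (Tmap s \<zeta>) \<eta> - dualrep (Rop sc) (Tmap (tau s) \<eta>) \<zeta>)))
   \<and>
   (s13_23 (circ sc pc) s - s13_12 pc s - s12_23 (odot sc pc) s = (\<lambda>x y z. 0)
     \<longleftrightarrow> (\<forall>\<zeta> \<eta>. circ sc pc (Tmap s \<zeta>) (Tmap s \<eta>) =
        Tmap s (- dualrep (Lop (odot sc pc)) (Tmap s \<zeta>) \<eta> - dualrep (Rop pc) (Tmap (tau s) \<eta>) \<zeta>)))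
   \<and>
   (s13_12 (circ sc pc) s - s13_23 pc s - s23_12 (odot sc pc) s = (\<lambda>x y z. 0)
     \<longleftrightarrow> (\<forall>\<zeta> \<eta>. pc (Tmap s \<zeta>) (Tmap s \<eta>) =
        Tmap s (dualrep (Rop (odot sc pc)) (Tmap s \<zeta>) \<eta> - dualrep (Rop (circ sc pc)) (Tmap (tau s) \<eta>) \<zeta>)))
   \<and>
   (s12_23 (star sc pc) s - s13_12 sc s - s13_23 sc s = (\<lambda>x y z. 0)
     \<longleftrightarrow> (\<forall>\<zeta> \<eta>. sc (Tmap s \<zeta>) (Tmap s \<eta>) =
        Tmap s (dualrep (Rop sc) (Tmap (tau s) \<eta>) \<zeta> - dualrep (Lop (star sc pc)) (Tmap s \<zeta>) \<eta>)))"
proof -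
  have sc: "bilinear_op sc" and pc: "bilinear_op pc"
    using assms unfolding anti_pre_Novikov_def by simp_all
  have circ: "bilinear_op (circ sc pc)" and odot: "bilinear_op (odot sc pc)"
    and star: "bilinear_op (star sc pc)"
    using bilinear_op_circ bilinear_op_odot bilinear_op_star sc pc by blast+
  show ?thesis
    using s12_13_plus_s23_13_plus_s12_23_eq_0_iff[OF circ odot pc]
      s12_13_minus_s13_23_plus_s12_23_eq_0_iff[OF pc odot circ]
      s12_13_plus_s13_23_minus_s12_23_eq_0_iff[OF sc star sc]
      s13_23_minus_s13_12_minus_s12_23_eq_0_iff[OF circ odot pc]
      s13_12_minus_s13_23_minus_s23_12_eq_0_iff[OF pc odot circ]
      s12_23_minus_s13_12_minus_s13_23_eq_0_iff[OF sc star sc]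
    by (simp only: Lop_star_eq_Rop_star simp_thms)
qed

end
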